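(* Let $\Phi \triangleright \Gamma \vdash^{(b,e,m,f)} t:\sigma$ be a derivation in system $\mathscr{E}$. Then (1) (Relevance) $\mathrm{dom}(\Gamma)\subseteq \mathrm{fv}(t)$; (2) (Clash-free) $t$ is (head) clash-free.
   Context: Pair pattern calculus: patterns $p,q ::= x\mid\langle p,q\rangle$ (linear); $\mathrm{var}(p)$ = variables of $p$; $p\# q$ means $\mathrm{var}(p)\cap\mathrm{var}(q)=\emptyset$. Terms $t,u ::= x\mid\lambda p.t\mid\langle t,u\rangle\mid t\,u\mid t[p/u]$, with $\mathrm{var}(p)$ bound in $t$ in $\lambda p.t$ and $t[p/u]$; $\mathrm{fv}$ as usual ($\mathrm{fv}(\lambda p.t)=\mathrm{fv}(t)\setminus\mathrm{var}(p)$, $\mathrm{fv}(t[p/u])=(\mathrm{fv}(t)\setminus\mathrm{var}(p))\cup\mathrm{fv}(u)$); terms modulo $\alpha$. List contexts $L::=\Box\mid L[p/u]$, $L\langle t\rangle$ plugging. Head clashes are terms of the form $L\langle\langle u_1,u_2\rangle\rangle v$, $t[\langle p_1,p_2\rangle/L\langle\lambda p.u\rangle]$, or $L_1\langle\lambda\langle p_1,p_2\rangle.t\rangle L_2\langle\lambda p.u\rangle$; a term is (head) clash-free if it contains no head clash in head position. System $\mathscr{E}$. Types: tight types $\mathtt{t} ::= \bullet_{\mathcal{N}}\mid\bullet_{\mathcal{M}}$; types $\sigma ::= \mathtt{t}\mid \mathcal{A}_1\times\mathcal{A}_2\mid \mathcal{A}\to\sigma$; multi-types $\mathcal{A} ::=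 [\sigma_k]_{k\in K}$ (finite multisets, possibly empty, written $[\,]$). A typing context $\Gamma$ maps variables to multi-types, with $\mathrm{dom}(\Gamma)$ the variables assigned a non-empty multi-type; $\Gamma\wedge\Delta$ is pointwise multiset union; $\Gamma;x:\mathcal{A}$ denotes $\Gamma$ extended with $x\notin\mathrm{dom}(\Gamma)$; $\Gamma|_p$ is the restriction of $\Gamma$ to $\mathrm{var}(p)$ and $\Gamma\setminus\mathrm{var}(p)$ the removal of $\mathrm{var}(p)$. $\mathrm{tight}(\sigma)$ iff $\sigma\in\{\bullet_{\mathcal{N}},\bullet_{\mathcal{M}}\}$; extended to multi-types and contexts elementwise. Judgements: $\Gamma\vdash^{(b,e,m,f)} t:\sigma$, $\Gamma\vdash^{(b,e,m,f)} t:\mathcal{A}$, and pattern judgements $\Gamma\Vdash^{(e,m,f)} p:\mathcal{A}$. Rules: (pat_v) $x:\mathcal{A}\Vdash^{(1,0,0)} x:\mathcal{A}$. (pat_×) from $\Gamma\Vdash^{(e_p,m_p,f_p)}p:\mathcal{A}$, $\Delta\Vdash^{(e_q,m_q,f_q)}q:\mathcal{B}$, $p\#q$ infer $\Gamma\wedge\Delta\Vdash^{(e_p+e_q,1+m_p+m_q,f_p+f_q)}\langle p,q\rangle:[\mathcal{A}\times\mathcal{B}]$. (pat_p) if $\mathrm{dom}(\Gamma)\subseteq\mathrm{var}(\langle p,q\rangle)$ and $\mathrm{tight}(\Gamma)$ then $\Gamma\Vdash^{(0,0,1)}\langle p,q\rangle:[\bullet_{\mathcal{N}}]$. (ax) $x:[\sigma]\vdash^{(0,0,0,0)}x:\sigma$.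 (abs) from $\Gamma\vdash^{(b,e,m,f)}t:\sigma$ and $\Gamma|_p\Vdash^{(e_p,m_p,f_p)}p:\mathcal{A}$ infer $\Gamma\setminus\mathrm{var}(p)\vdash^{(b+1,e+e_p,m+m_p,f+f_p)}\lambda p.t:\mathcal{A}\to\sigma$. (abs_p) from $\Gamma\vdash^{(b,e,m,f)}t:\mathtt{t}$ with $\mathtt{t}$ tight and $\mathrm{tight}(\Gamma|_p)$ infer $\Gamma\setminus\mathrm{var}(p)\vdash^{(b,e,m,f+1)}\lambda p.t:\bullet_{\mathcal{M}}$. (many) from $(\Gamma_k\vdash^{(b_k,e_k,m_k,f_k)}t:\sigma_k)_{k\in K}$ ($K$ possibly empty) infer $\wedge_k\Gamma_k\vdash^{(\sum b_k,\sum e_k,\sum m_k,\sum f_k)}t:[\sigma_k]_{k\in K}$. (app) from $\Gamma\vdash^{(b_t,e_t,m_t,f_t)}t:\mathcal{A}\to\sigma$ and $\Delta\vdash^{(b_u,e_u,m_u,f_u)}u:\mathcal{A}$ infer $\Gamma\wedge\Delta\vdash^{(b_t+b_u,e_t+e_u,m_t+m_u,f_t+f_u)}t\,u:\sigma$. (app_p) from $\Gamma\vdash^{(b,e,m,f)}t:\bullet_{\mathcal{N}}$ infer $\Gamma\vdash^{(b,e,m,f+1)}t\,u:\bullet_{\mathcal{N}}$. (pair) from $\Gamma\vdash^{(b_t,e_t,m_t,f_t)}t:\mathcal{A}$ and $\Delta\vdash^{(b_u,e_u,m_u,f_u)}u:\mathcal{B}$ infer $\Gamma\wedge\Delta\vdash^{(b_t+b_u,e_t+e_u,m_t+m_u,f_t+f_u)}\langle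 t,u\rangle:\mathcal{A}\times\mathcal{B}$. (pair_p) $\vdash^{(0,0,0,1)}\langle t,u\rangle:\bullet_{\mathcal{M}}$ (empty context). (match) from $\Gamma\vdash^{(b_t,e_t,m_t,f_t)}t:\sigma$, $\Gamma|_p\Vdash^{(e_p,m_p,f_p)}p:\mathcal{A}$ and $\Delta\vdash^{(b_u,e_u,m_u,f_u)}u:\mathcal{A}$ infer $(\Gamma\setminus\mathrm{var}(p))\wedge\Delta\vdash^{(b_t+b_u,e_t+e_u+e_p,m_t+m_u+m_p,f_t+f_u+f_p)}t[p/u]:\sigma$. *)

theory Defs
  imports Main "HOL-Library.Multiset"
begin

datatype 'v pat = PVar 'v | PPair "'v pat" "'v pat"

datatype 'v trm =
    Var 'v
  | Lam "'v pat" "'v trm"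
  | Pair "'v trm" "'v trm"
  | App "'v trm" "'v trm"
  | Sub "'v trm" "'v pat" "'v trm"   \<comment> \<open>Sub t p u  is  t[p/u]\<close>

fun pvars :: "'v pat \<Rightarrow> 'v set" where
  "pvars (PVar x) = {x}"
| "pvars (PPair p q) = pvars p \<union> pvars q"

fun linear_pat :: "'v pat \<Rightarrow> bool" where
  "linear_pat (PVar x) = True"
| "linear_pat (PPair p q) = (linear_pat p \<and> linear_pat q \<and> pvars p \<inter> pvars q = {})"

fun wf_trm :: "'v trm \<Rightarrow> bool" where
  "wf_trm (Var x) = True"
| "wf_trm (Lam p t) = (linear_pat p \<and> wf_trm t)"
| "wf_trm (Pair t u) = (wf_trm t \<and> wf_trm u)"
| "wf_trm (App t u) = (wf_trm t \<and> wf_trm u)"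
| "wf_trm (Sub t p u) = (linear_pat p \<and> wf_trm t \<and> wf_trm u)"

fun fv :: "'v trm \<Rightarrow> 'v set" where
  "fv (Var x) = {x}"
| "fv (Lam p t) = fv t - pvars p"
| "fv (Pair t u) = fv t \<union> fv u"
| "fv (App t u) = fv t \<union> fv u"
| "fv (Sub t p u) = (fv t - pvars p) \<union> fv u"

text \<open>A list context  L ::= Box | L[p/u]  is represented by the list of its
  explicit matchings, outermost first.\<close>
type_synonym 'v lctx = "('v pat \<times> 'v trm) list"

fun plugL :: "'v lctx \<Rightarrow> 'v trm \<Rightarrow> 'v trm" where
  "plugL [] t = t"
| "plugL ((p, u) # L) t = Sub (plugL L t) p u"

definition head_clash :: "'v trm \<Rightarrow> bool" where
  "head_clash s \<longleftrightarrow>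
     (\<exists>L u1 u2 v. s = App (plugL L (Pair u1 u2)) v)
   \<or> (\<exists>t p1 p2 L p u. s = Sub t (PPair p1 p2) (plugL L (Lam p u)))
   \<or> (\<exists>L1 p1 p2 t L2 p u. s = App (plugL L1 (Lam (PPair p1 p2) t)) (plugL L2 (Lam p u)))"

inductive head_sub :: "'v trm \<Rightarrow> 'v trm \<Rightarrow> bool" where
  hs_here: "head_sub t t"
| hs_lam: "head_sub s t \<Longrightarrow> head_sub s (Lam p t)"
| hs_app: "head_sub s t \<Longrightarrow> head_sub s (App t u)"
| hs_sub: "head_sub s t \<Longrightarrow> head_sub s (Sub t p u)"
| hs_subarg: "head_sub s u \<Longrightarrow> head_sub s (Sub t (PPair p1 p2) u)"

definition clash_free :: "'v trm \<Rightarrow> bool" where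
  "clash_free t \<longleftrightarrow> (\<forall>s. head_sub s t \<longrightarrow> \<not> head_clash s)"

datatype ty =
    TN
  | TM
  | Prod "ty multiset" "ty multiset"
  | Arr "ty multiset" ty

definition tight :: "ty \<Rightarrow> bool" where
  "tight \<sigma> \<longleftrightarrow> \<sigma> = TN \<or> \<sigma> = TM"

type_synonym 'v ctx = "'v \<Rightarrow> ty multiset"

definition emp :: "'v ctx" where "emp = (\<lambda>_. {#})"

definition cdom :: "'v ctx \<Rightarrow> 'v set" where
  "cdom \<Gamma> = {x. \<Gamma> x \<noteq> {#}}"

definition cjoin :: "'v ctx \<Rightarrow> 'v ctx \<Rightarrow> 'v ctx" where
  "cjoin \<Gamma> \<Delta> = (\<lambda>x. \<Gamma> x + \<Delta> x)"

definition crestrict :: "'v ctx \<Rightarrow> 'v pat \<Rightarrow> 'v ctx" where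
  "crestrict \<Gamma> p = (\<lambda>x. if x \<in> pvars p then \<Gamma> x else {#})"

definition cremove :: "'v ctx \<Rightarrow> 'v pat \<Rightarrow> 'v ctx" where
  "cremove \<Gamma> p = (\<lambda>x. if x \<in> pvars p then {#} else \<Gamma> x)"

definition tight_ctx :: "'v ctx \<Rightarrow> bool" where
  "tight_ctx \<Gamma> \<longleftrightarrow> (\<forall>x. \<forall>\<sigma>\<in>#\<Gamma> x. tight \<sigma>)"

text \<open>patj \<Gamma> p A e m f  is  \<Gamma> ||-^(e,m,f) p : A\<close>
inductive patj :: "'v ctx \<Rightarrow> 'v pat \<Rightarrow> ty multiset \<Rightarrow> nat \<Rightarrow> nat \<Rightarrow> nat \<Rightarrow> bool" where
  pat_v: "patj (emp(x := A)) (PVar x) A 1 0 0"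
| pat_pair: "patj \<Gamma> p A ep mp fp \<Longrightarrow> patj \<Delta> q B eq mq fq \<Longrightarrow> pvars p \<inter> pvars q = {} \<Longrightarrow>
     patj (cjoin \<Gamma> \<Delta>) (PPair p q) {#Prod A B#} (ep + eq) (1 + mp + mq) (fp + fq)"
| pat_p: "cdom \<Gamma> \<subseteq> pvars (PPair p q) \<Longrightarrow> tight_ctx \<Gamma> \<Longrightarrow> patj \<Gamma> (PPair p q) {#TN#} 0 0 1"

text \<open>typing \<Gamma> t \<sigma> b e m f  is  \<Gamma> |-^(b,e,m,f) t : \<sigma>;
  mtyping \<Gamma> t A b e m f  is  \<Gamma> |-^(b,e,m,f) t : A  (rule many, with the finite
  family given one element at a time).\<close>
inductive typing :: "'v ctx \<Rightarrow> 'v trm \<Rightarrow> ty \<Rightarrow> nat \<Rightarrow> nat \<Rightarrow> nat \<Rightarrow> nat \<Rightarrow> bool"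
  and mtyping :: "'v ctx \<Rightarrow> 'v trm \<Rightarrow> ty multiset \<Rightarrow> nat \<Rightarrow> nat \<Rightarrow> nat \<Rightarrow> nat \<Rightarrow> bool" where
  ax: "typing (emp(x := {#\<sigma>#})) (Var x) \<sigma> 0 0 0 0"
| abs: "typing \<Gamma> t \<sigma> b e m f \<Longrightarrow> patj (crestrict \<Gamma> p) p A ep mp fp \<Longrightarrow>
     typing (cremove \<Gamma> p) (Lam p t) (Arr A \<sigma>) (b + 1) (e + ep) (m + mp) (f + fp)"
| abs_p: "typing \<Gamma> t \<tau> b e m f \<Longrightarrow> tight \<tau> \<Longrightarrow> tight_ctx (crestrict \<Gamma> p) \<Longrightarrow>
     typing (cremove \<Gamma> p) (Lam p t) TM b e m (f + 1)"
| many_nil: "mtyping emp t {#} 0 0 0 0"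
| many_cons: "typing \<Gamma> t \<sigma> b e m f \<Longrightarrow> mtyping \<Delta> t A b' e' m' f' \<Longrightarrow>
     mtyping (cjoin \<Gamma> \<Delta>) t (add_mset \<sigma> A) (b + b') (e + e') (m + m') (f + f')"
| app: "typing \<Gamma> t (Arr A \<sigma>) bt et mt ft \<Longrightarrow> mtyping \<Delta> u A bu eu mu fu \<Longrightarrow>
     typing (cjoin \<Gamma> \<Delta>) (App t u) \<sigma> (bt + bu) (et + eu) (mt + mu) (ft + fu)"
| app_p: "typing \<Gamma> t TN b e m f \<Longrightarrow> typing \<Gamma> (App t u) TN b e m (f + 1)"
| pair: "mtyping \<Gamma> t A bt et mt ft \<Longrightarrow> mtyping \<Delta> u B bu eu mu fu \<Longrightarrow>
     typing (cjoin \<Gamma> \<Delta>) (Pair t u) (Prod A B) (bt + bu) (et + eu) (mt + mu) (ft + fu)"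
| pair_p: "typing emp (Pair t u) TM 0 0 0 1"
| match: "typing \<Gamma> t \<sigma> bt et mt ft \<Longrightarrow> patj (crestrict \<Gamma> p) p A ep mp fp \<Longrightarrow>
     mtyping \<Delta> u A bu eu mu fu \<Longrightarrow>
     typing (cjoin (cremove \<Gamma> p) \<Delta>) (Sub t p u) \<sigma> (bt + bu) (et + eu + ep) (mt + mu + mp) (ft + fu + fp)"

end

theory Submission
  imports Defs
begin

text \<open>Relevance holds because variables enter contexts only through the axiom rule,
  contexts are joined by the binary rules, and binders remove exactly the pattern
  variables, in step with the free variables. For clash-freeness, every subterm at a head
  position of a typable term is itself typable (a pattern of pair shape has a non-empty
  multi-type, so the argument of a pair matching receives at least one type). But a pair
  can only be typed by a product or \<open>\<bullet>\<^sub>M\<close>, an abstraction only by an arrow or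
  \<open>\<bullet>\<^sub>M\<close>, and list contexts do not change the type; whereas an applied term needs an
  arrow or \<open>\<bullet>\<^sub>N\<close>, and a pair pattern demands a product or \<open>\<bullet>\<^sub>N\<close>.\<close>

definition has_type :: "'v trm \<Rightarrow> ty \<Rightarrow> bool" where
  "has_type t \<sigma> \<longleftrightarrow> (\<exists>\<Gamma> b e m f. typing \<Gamma> t \<sigma> b e m f)"

lemma has_typeI: "typing \<Gamma> t \<sigma> b e m f \<Longrightarrow> has_type t \<sigma>"
  unfolding has_type_def by blast

inductive_cases typing_LamE: "typing \<Gamma> (Lam p t) \<sigma> b e m f"
inductive_cases typing_AppE: "typing \<Gamma> (App t u) \<sigma> b e m f"
inductive_cases typing_PairE: "typing \<Gamma> (Pair t u) \<sigma> b e m f"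
inductive_cases typing_SubE: "typing \<Gamma> (Sub t p u) \<sigma> b e m f"

lemma cdom_emp [simp]: "cdom emp = {}"
  by (simp add: cdom_def emp_def)

lemma cdom_cjoin [simp]: "cdom (cjoin \<Gamma> \<Delta>) = cdom \<Gamma> \<union> cdom \<Delta>"
  by (auto simp: cdom_def cjoin_def)

lemma cdom_cremove [simp]: "cdom (cremove \<Gamma> p) = cdom \<Gamma> - pvars p"
  by (auto simp: cdom_def cremove_def)

lemma typing_cdom_subset_fv:
  "typing \<Gamma> t \<sigma> b e m f \<Longrightarrow> cdom \<Gamma> \<subseteq> fv t"
  "mtyping \<Gamma> t A b e m f \<Longrightarrow> cdom \<Gamma> \<subseteq> fv t"
proof (induction rule: typing_mtyping.inducts)
  case (ax x \<sigma>)
  then show ?case by (auto simp: cdom_def emp_def)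
qed auto

lemma mtyping_has_type:
  assumes "mtyping \<Delta> u A b e m f" and "\<sigma> \<in># A"
  shows "has_type u \<sigma>"
  using assms
proof (induction rule: typing_mtyping.inducts(2)[where ?P1.0 = "\<lambda>_ _ _ _ _ _ _. True"])
  case (many_cons \<Gamma> t \<tau> b e m f \<Delta> A b' e' m' f')
  then show ?case by (cases "\<sigma> = \<tau>") (auto intro: has_typeI)
qed auto

lemma patj_PPair_type:
  "patj \<Gamma> (PPair p q) A e m f \<Longrightarrow> A = {#TN#} \<or> (\<exists>X Y. A = {#Prod X Y#})"
  by (cases rule: patj.cases) auto

lemma pair_pattern_argument_type:
  assumes "patj \<Gamma> (PPair p q) A e m f" and "mtyping \<Delta> u A b' e' m' f'"
  obtains \<sigma> where "has_type u \<sigma>" and "\<sigma> = TN \<or> (\<exists>X Y. \<sigma> = Prod X Y)"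
  using patj_PPair_type[OF assms(1)] mtyping_has_type[OF assms(2)] by fastforce

lemma has_type_plugL: "has_type (plugL L t) \<sigma> \<Longrightarrow> has_type t \<sigma>"
proof (induction L)
  case (Cons pu L)
  obtain p u where "pu = (p, u)" by fastforce
  with Cons.prems obtain \<Gamma> b e m f where "typing \<Gamma> (Sub (plugL L t) p u) \<sigma> b e m f"
    by (auto simp: has_type_def)
  then have "has_type (plugL L t) \<sigma>"
    by (auto elim: typing_SubE intro: has_typeI)
  then show ?case by (rule Cons.IH)
qed simp

lemma has_type_plugL_Pair:
  assumes "has_type (plugL L (Pair t u)) \<sigma>"
  shows "\<sigma> = TM \<or> (\<exists>A B. \<sigma> = Prod A B)"
proof -
  have "has_type (Pair t u) \<sigma>"
    using assms by (rule has_type_plugL)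
  then show ?thesis by (auto simp: has_type_def elim: typing_PairE)
qed

lemma has_type_plugL_Lam:
  assumes "has_type (plugL L (Lam p t)) \<sigma>"
  shows "\<sigma> = TM \<or> (\<exists>A \<tau>. \<sigma> = Arr A \<tau>)"
proof -
  have "has_type (Lam p t) \<sigma>"
    using assms by (rule has_type_plugL)
  then show ?thesis by (auto simp: has_type_def elim: typing_LamE)
qed

lemma has_type_not_head_clash:
  assumes "has_type s \<sigma>"
  shows "\<not> head_clash s"
proof
  from assms obtain \<Gamma> b e m f where s_typed: "typing \<Gamma> s \<sigma> b e m f"
    by (auto simp: has_type_def)
  assume "head_clash s"
  then consider
      (app_pair) L u1 u2 v where "s = App (plugL L (Pair u1 u2)) v"
    | (match_lam) t p1 p2 L p u where "s = Sub t (PPair p1 p2) (plugL L (Lam p u))"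
    | (app_lam) L1 p1 p2 t L2 p u
        where "s = App (plugL L1 (Lam (PPair p1 p2) t)) (plugL L2 (Lam p u))"
    unfolding head_clash_def by blast
  then show False
  proof cases
    case app_pair
    with s_typed show False
      by (auto elim!: typing_AppE dest!: has_type_plugL_Pair[OF has_typeI])
  next
    case match_lam
    with s_typed show False
      by (auto elim!: typing_SubE pair_pattern_argument_type dest!: has_type_plugL_Lam)
  next
    case app_lam
    from s_typed obtain \<Gamma>' A \<tau> b' e' m' f' \<Delta> b'' e'' m'' f''
      where fun_typed: "typing \<Gamma>' (plugL L1 (Lam (PPair p1 p2) t)) (Arr A \<tau>) b' e' m' f'"
        and arg_typed: "mtyping \<Delta> (plugL L2 (Lam p u)) A b'' e'' m'' f''"
      unfolding app_lam by (elim typing_AppE) (auto dest: has_type_plugL_Lam[OF has_typeI])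
    have "has_type (Lam (PPair p1 p2) t) (Arr A \<tau>)"
      using has_typeI[OF fun_typed] by (rule has_type_plugL)
    then obtain \<Gamma>'' e m f where "patj \<Gamma>'' (PPair p1 p2) A e m f"
      by (auto simp: has_type_def elim: typing_LamE)
    from this arg_typed show False
      by (rule pair_pattern_argument_type) (auto dest: has_type_plugL_Lam)
  qed
qed

lemma head_sub_has_type:
  "head_sub s t \<Longrightarrow> typing \<Gamma> t \<sigma> b e m f \<Longrightarrow> \<exists>\<tau>. has_type s \<tau>"
proof (induction arbitrary: \<Gamma> \<sigma> b e m f rule: head_sub.induct)
  case (hs_here t)
  then show ?case by (blast intro: has_typeI)
next
  case (hs_lam s t p)
  then show ?case by (blast elim: typing_LamE)
next
  case (hs_app s t u)
  then show ?case by (blast elim: typing_AppE)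
next
  case (hs_sub s t p u)
  then show ?case by (blast elim: typing_SubE)
next
  case (hs_subarg s u t p1 p2)
  then obtain \<Gamma>' \<Delta> A e m f b' e' m' f'
    where "patj \<Gamma>' (PPair p1 p2) A e m f" and "mtyping \<Delta> u A b' e' m' f'"
    by (auto elim: typing_SubE)
  then show ?case
    by (rule pair_pattern_argument_type) (use hs_subarg.IH in \<open>auto simp: has_type_def\<close>)
qed

theorem lemma2:
  fixes t :: "'v trm" and \<Gamma> :: "'v ctx"
  assumes "wf_trm t"
    and "typing \<Gamma> t \<sigma> b e m f"
  shows "cdom \<Gamma> \<subseteq> fv t \<and> clash_free t"
proof
  show "cdom \<Gamma> \<subseteq> fv t"
    using assms(2) by (rule typing_cdom_subset_fv)
  show "clash_free t"
    unfolding clash_free_def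
    using assms(2) head_sub_has_type has_type_not_head_clash by blast
qed

end
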